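(* A connected GSC $F=F(N,\mathcal D)$ is fragile if and only if there is a point $x\in F$ such that deleting from the labelled first Hata graph all edges labelled $x$ yields a disconnected graph.
   Context: GSC: $N\ge2$, $\mathcal D\subset\{0,\dots,N-1\}^2$ with $1<|\mathcal D|<N^2$, $\varphi_i(x)=\frac1N(x+i)$, $F$ the attractor $F=\bigcup_{i\in\mathcal D}\varphi_i(F)$. The first Hata graph $\Gamma_1$ has vertex set $\mathcal D$ and an edge between distinct $i,j$ iff $\varphi_i(F)\cap\varphi_j(F)\ne\varnothing$. In the labelled first Hata graph, an edge $\{i,j\}$ carries the label $x\in F$ iff $\varphi_i(F)\cap\varphi_j(F)=\{x\}$ (edges whose intersection is not a singleton carry no label). $F$ is fragile if there is a partition $\mathcal D=\mathcal D_1\cup\mathcal D_2$ into disjoint nonempty sets with $\big(\bigcup_{i\in\mathcal D_1}\varphi_i(F)\big)\cap\big(\bigcup_{i\in\mathcal D_2}\varphi_i(F)\big)$ a singleton. *)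

theory Defs
  imports "HOL-Analysis.Analysis"
begin

definition gsc_map :: "nat \<Rightarrow> nat \<times> nat \<Rightarrow> real \<times> real \<Rightarrow> real \<times> real" where
  "gsc_map N i x = (1 / real N) *\<^sub>R (x + (real (fst i), real (snd i)))"

definition is_GSC :: "nat \<Rightarrow> (nat \<times> nat) set \<Rightarrow> bool" where
  "is_GSC N D \<longleftrightarrow> N \<ge> 2 \<and> D \<subseteq> {0..<N} \<times> {0..<N} \<and> 1 < card D \<and> card D < N ^ 2"

text \<open>The attractor: the unique nonempty compact set F with F = union of the images
  (uniqueness and existence by Hutchinson's theorem).\<close>
definition gsc_attractor :: "nat \<Rightarrow> (nat \<times> nat) set \<Rightarrow> (real \<times> real) set" where
  "gsc_attractor N D = (THE F. compact F \<and> F \<noteq> {} \<and> F = (\<Union>i\<in>D. gsc_map N i ` F))"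

definition hata_edge :: "nat \<Rightarrow> (nat \<times> nat) set \<Rightarrow> nat \<times> nat \<Rightarrow> nat \<times> nat \<Rightarrow> bool" where
  "hata_edge N D i j \<longleftrightarrow> i \<in> D \<and> j \<in> D \<and> i \<noteq> j \<and>
     gsc_map N i ` gsc_attractor N D \<inter> gsc_map N j ` gsc_attractor N D \<noteq> {}"

definition hata_label :: "nat \<Rightarrow> (nat \<times> nat) set \<Rightarrow> nat \<times> nat \<Rightarrow> nat \<times> nat \<Rightarrow> real \<times> real \<Rightarrow> bool" where
  "hata_label N D i j x \<longleftrightarrow>
     gsc_map N i ` gsc_attractor N D \<inter> gsc_map N j ` gsc_attractor N D = {x}"

definition graph_connected :: "'a set \<Rightarrow> ('a \<Rightarrow> 'a \<Rightarrow> bool) \<Rightarrow> bool" where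
  "graph_connected V E \<longleftrightarrow>
     (\<forall>u\<in>V. \<forall>v\<in>V. (u, v) \<in> {(a, b). a \<in> V \<and> b \<in> V \<and> (E a b \<or> E b a)}\<^sup>*)"

definition fragile :: "nat \<Rightarrow> (nat \<times> nat) set \<Rightarrow> bool" where
  "fragile N D \<longleftrightarrow> (\<exists>D1 D2. D1 \<noteq> {} \<and> D2 \<noteq> {} \<and> D1 \<inter> D2 = {} \<and> D1 \<union> D2 = D \<and>
     (\<exists>x. (\<Union>i\<in>D1. gsc_map N i ` gsc_attractor N D) \<inter>
          (\<Union>i\<in>D2. gsc_map N i ` gsc_attractor N D) = {x}))"

end

theory Submission
  imports Defs
begin

text \<open>Both directions only use that the attractor is a connected set covered by the finitely
  many closed, nonempty pieces \<open>\<phi>\<^sub>i(F)\<close>. A partition of the digits whose two unions of pieces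
  meet exactly in \<open>{x}\<close> is precisely a cut of the first Hata graph crossed only by edges
  labelled \<open>x\<close>; conversely, a cut crossed only by such edges gives two closed sets covering
  the connected set \<open>F\<close>, which must therefore meet, and can meet only in \<open>x\<close>.
  Since the attractor is given by a definite description, Hutchinson's theorem (existence
  and uniqueness of a nonempty compact fixed set of \<open>S \<mapsto> \<Union>\<^sub>i \<phi>\<^sub>i(S)\<close>) is needed as well.\<close>

lemma not_graph_connected_iff_cut:
  "\<not> graph_connected V E \<longleftrightarrow>
     (\<exists>V1 V2. V1 \<noteq> {} \<and> V2 \<noteq> {} \<and> V1 \<inter> V2 = {} \<and> V1 \<union> V2 = V \<and>
        (\<forall>a\<in>V1. \<forall>b\<in>V2. \<not> E a b \<and> \<not> E b a))"
proof -
  define R where "R = {(a, b). a \<in> V \<and> b \<in> V \<and> (E a b \<or> E b a)}"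
  have stays_in_side: "b \<in> V1"
    if "(a, b) \<in> R\<^sup>*" "a \<in> V1" "V1 \<union> V2 = V" "\<forall>a\<in>V1. \<forall>b\<in>V2. \<not> E a b \<and> \<not> E b a"
    for a b V1 V2
    using that(1,2) by (induction rule: rtrancl_induct) (use that(3,4) R_def in blast)+
  show ?thesis
  proof
    assume "\<not> graph_connected V E"
    then obtain u v where uv: "u \<in> V" "v \<in> V" "(u, v) \<notin> R\<^sup>*"
      unfolding graph_connected_def R_def by blast
    define V1 where "V1 = {w \<in> V. (u, w) \<in> R\<^sup>*}"
    have "\<not> E a b \<and> \<not> E b a" if "a \<in> V1" "b \<in> V - V1" for a b
    proof -
      have "(a, b) \<in> R \<Longrightarrow> (u, b) \<in> R\<^sup>*"
        using that(1) unfolding V1_def by (auto intro: rtrancl_into_rtrancl)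
      then show ?thesis using that unfolding V1_def R_def by blast
    qed
    moreover have "u \<in> V1" "v \<in> V - V1" using uv unfolding V1_def by auto
    ultimately show "\<exists>V1 V2. V1 \<noteq> {} \<and> V2 \<noteq> {} \<and> V1 \<inter> V2 = {} \<and> V1 \<union> V2 = V \<and>
        (\<forall>a\<in>V1. \<forall>b\<in>V2. \<not> E a b \<and> \<not> E b a)"
      by (intro exI[of _ V1] exI[of _ "V - V1"]) (auto simp: V1_def)
  next
    assume "\<exists>V1 V2. V1 \<noteq> {} \<and> V2 \<noteq> {} \<and> V1 \<inter> V2 = {} \<and> V1 \<union> V2 = V \<and>
        (\<forall>a\<in>V1. \<forall>b\<in>V2. \<not> E a b \<and> \<not> E b a)"
    then obtain V1 V2 u v where cut: "V1 \<inter> V2 = {}" "V1 \<union> V2 = V"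
        "\<forall>a\<in>V1. \<forall>b\<in>V2. \<not> E a b \<and> \<not> E b a" and "u \<in> V1" "v \<in> V2"
      by blast
    then have "(u, v) \<notin> R\<^sup>*" using stays_in_side[of u v V1 V2] by blast
    then show "\<not> graph_connected V E"
      unfolding graph_connected_def R_def using \<open>u \<in> V1\<close> \<open>v \<in> V2\<close> cut(2) by blast
  qed
qed

lemma connected_finite_closed_cover_parts_meet:
  assumes "connected S" "S = (\<Union>i\<in>I. P i)" "finite I" "\<And>i. i \<in> I \<Longrightarrow> closed (P i)"
    and "I1 \<union> I2 = I" "(\<Union>i\<in>I1. P i) \<noteq> {}" "(\<Union>i\<in>I2. P i) \<noteq> {}"
  shows "(\<Union>i\<in>I1. P i) \<inter> (\<Union>i\<in>I2. P i) \<noteq> {}"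
proof -
  have "finite I1" "finite I2" using assms(3,5) by (auto intro: finite_subset)
  then have "closed (\<Union>i\<in>I1. P i)" "closed (\<Union>i\<in>I2. P i)" using assms(4,5) by auto
  then show ?thesis using assms(1,2,5-7) unfolding connected_closed by blast
qed

lemma single_point_cut_iff_intersection_graph_disconnected:
  fixes P :: "'i \<Rightarrow> 'a::topological_space set"
  assumes conn: "connected S" and cover: "S = (\<Union>i\<in>I. P i)" and "finite I"
    and closed_pieces: "\<And>i. i \<in> I \<Longrightarrow> closed (P i)"
    and nonempty_pieces: "\<And>i. i \<in> I \<Longrightarrow> P i \<noteq> {}"
  shows "(\<exists>I1 I2. I1 \<noteq> {} \<and> I2 \<noteq> {} \<and> I1 \<inter> I2 = {} \<and> I1 \<union> I2 = I \<and>
            (\<exists>x. (\<Union>i\<in>I1. P i) \<inter> (\<Union>i\<in>I2. P i) = {x})) \<longleftrightarrow>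
         (\<exists>x\<in>S. \<not> graph_connected I
            (\<lambda>i j. i \<in> I \<and> j \<in> I \<and> i \<noteq> j \<and> P i \<inter> P j \<noteq> {} \<and> \<not> P i \<inter> P j = {x}))"
    (is "?cut \<longleftrightarrow> (\<exists>x\<in>S. \<not> graph_connected I (?E x))")
proof
  assume ?cut
  then obtain I1 I2 x where parts: "I1 \<noteq> {}" "I2 \<noteq> {}" "I1 \<inter> I2 = {}" "I1 \<union> I2 = I"
    and meet: "(\<Union>i\<in>I1. P i) \<inter> (\<Union>i\<in>I2. P i) = {x}"
    by blast
  have "x \<in> S" using meet cover parts(4) by blast
  have "\<forall>a\<in>I1. \<forall>b\<in>I2. \<not> ?E x a b \<and> \<not> ?E x b a"
  proof (intro ballI)
    fix a b assume "a \<in> I1" "b \<in> I2"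
    then have "P a \<inter> P b \<subseteq> {x}" using meet by blast
    then show "\<not> ?E x a b \<and> \<not> ?E x b a" by (auto simp: Int_commute subset_singleton_iff)
  qed
  then have "\<not> graph_connected I (?E x)"
    unfolding not_graph_connected_iff_cut using parts by (intro exI[of _ I1] exI[of _ I2]) simp
  then show "\<exists>x\<in>S. \<not> graph_connected I (?E x)" using \<open>x \<in> S\<close> by blast
next
  assume "\<exists>x\<in>S. \<not> graph_connected I (?E x)"
  then obtain x where "\<not> graph_connected I (?E x)" by blast
  then obtain I1 I2 where parts: "I1 \<noteq> {}" "I2 \<noteq> {}" "I1 \<inter> I2 = {}" "I1 \<union> I2 = I"
    and no_edge: "\<forall>a\<in>I1. \<forall>b\<in>I2. \<not> ?E x a b \<and> \<not> ?E x b a"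
    unfolding not_graph_connected_iff_cut by (elim exE conjE)
  have "P a \<inter> P b \<subseteq> {x}" if "a \<in> I1" "b \<in> I2" for a b
  proof -
    have "a \<in> I" "b \<in> I" "a \<noteq> b" using that parts(3,4) by auto
    moreover have "\<not> ?E x a b" using no_edge that by blast
    ultimately show ?thesis by (auto simp: subset_singleton_iff)
  qed
  then have "(\<Union>i\<in>I1. P i) \<inter> (\<Union>i\<in>I2. P i) \<subseteq> {x}" by blast
  moreover have "(\<Union>i\<in>I1. P i) \<noteq> {}" "(\<Union>i\<in>I2. P i) \<noteq> {}"
    using parts nonempty_pieces by blast+
  then have "(\<Union>i\<in>I1. P i) \<inter> (\<Union>i\<in>I2. P i) \<noteq> {}"
    using connected_finite_closed_cover_parts_meet[OF conn cover \<open>finite I\<close> closed_pieces parts(4)]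
    by blast
  ultimately have "(\<Union>i\<in>I1. P i) \<inter> (\<Union>i\<in>I2. P i) = {x}"
    by (simp add: subset_singleton_iff)
  with parts show ?cut by blast
qed

definition gsc_hutchinson :: "nat \<Rightarrow> (nat \<times> nat) set \<Rightarrow> (real \<times> real) set \<Rightarrow> (real \<times> real) set" where
  "gsc_hutchinson N D S = (\<Union>i\<in>D. gsc_map N i ` S)"

lemma dist_gsc_map:
  assumes "N > 0"
  shows "dist (gsc_map N i a) (gsc_map N i b) = dist a b / real N"
proof -
  have "gsc_map N i a - gsc_map N i b = (1 / real N) *\<^sub>R (a - b)"
    unfolding gsc_map_def by (simp add: algebra_simps)
  then show ?thesis using assms by (simp add: dist_norm)
qed

lemma inj_gsc_map:
  assumes "N > 0"
  shows "inj (gsc_map N i)"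
proof (rule injI)
  fix a b assume "gsc_map N i a = gsc_map N i b"
  then have "dist a b / real N = 0" using dist_gsc_map[OF assms] by (metis dist_self)
  then show "a = b" using assms by simp
qed

lemma continuous_on_gsc_map: "continuous_on S (gsc_map N i)"
  unfolding gsc_map_def by (intro continuous_intros)

lemma gsc_map_unit_square:
  assumes "N \<ge> 1" "i \<in> {0..<N} \<times> {0..<N}" "x \<in> {0..1} \<times> {0..1}"
  shows "gsc_map N i x \<in> {0..1} \<times> {0..1}"
proof -
  obtain a b p q where x: "x = (a, b)" and i: "i = (p, q)" by force
  have N: "real N \<ge> 1" using assms(1) by simp
  have "real p + 1 \<le> real N" "real q + 1 \<le> real N" using assms(2) i by auto
  moreover have "0 \<le> a" "a \<le> 1" "0 \<le> b" "b \<le> 1" using assms(3) x by auto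
  ultimately have "(a + real p) / real N \<le> 1" "(b + real q) / real N \<le> 1"
    "0 \<le> (a + real p) / real N" "0 \<le> (b + real q) / real N"
    using N by (simp_all add: divide_le_eq)
  then show ?thesis unfolding gsc_map_def x i by simp
qed

lemma gsc_hutchinson_mono: "S \<subseteq> T \<Longrightarrow> gsc_hutchinson N D S \<subseteq> gsc_hutchinson N D T"
  unfolding gsc_hutchinson_def by blast

lemma compact_gsc_hutchinson: "finite D \<Longrightarrow> compact S \<Longrightarrow> compact (gsc_hutchinson N D S)"
  unfolding gsc_hutchinson_def
  by (intro compact_UN compact_continuous_image continuous_on_gsc_map)

lemma gsc_hutchinson_fixpoints_approx:
  assumes "N > 0" and F: "gsc_hutchinson N D F = F" and G: "gsc_hutchinson N D G = G"
    and "G \<noteq> {}" and B: "\<forall>x\<in>F. \<forall>y\<in>G. dist x y \<le> B" and "x \<in> F"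
  shows "\<exists>z\<in>G. dist x z \<le> B / real N ^ n"
  using \<open>x \<in> F\<close>
proof (induction n arbitrary: x)
  case 0
  then show ?case using B \<open>G \<noteq> {}\<close> by fastforce
next
  case (Suc n)
  then obtain i y where i: "i \<in> D" "y \<in> F" "x = gsc_map N i y"
    using F unfolding gsc_hutchinson_def by blast
  then obtain z where z: "z \<in> G" "dist y z \<le> B / real N ^ n" using Suc.IH by blast
  have "gsc_map N i z \<in> G" using G i z unfolding gsc_hutchinson_def by blast
  moreover have "dist x (gsc_map N i z) \<le> B / real N ^ Suc n"
    using i z \<open>N > 0\<close> by (simp add: dist_gsc_map divide_right_mono field_simps)
  ultimately show ?case by blast
qed

lemma gsc_hutchinson_fixpoints_subset:
  assumes "N \<ge> 2" "compact F" "compact G" "G \<noteq> {}"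
    and F: "gsc_hutchinson N D F = F" and G: "gsc_hutchinson N D G = G"
  shows "F \<subseteq> G"
proof
  fix x assume "x \<in> F"
  have N_pos: "N > 0" using \<open>N \<ge> 2\<close> by simp
  define B where "B = diameter (F \<union> G)"
  have "bounded (F \<union> G)" using assms(2,3) by (simp add: compact_imp_bounded)
  then have "\<forall>x\<in>F. \<forall>y\<in>G. dist x y \<le> B" unfolding B_def using diameter_bounded_bound by blast
  note approx = gsc_hutchinson_fixpoints_approx[OF N_pos F G \<open>G \<noteq> {}\<close> this \<open>x \<in> F\<close>]
  have "\<exists>z\<in>G. dist z x < e" if "e > 0" for e
  proof -
    obtain n where "B / e < real N ^ n" using real_arch_pow \<open>N \<ge> 2\<close> by fastforce
    then have "B / real N ^ n < e" using \<open>e > 0\<close> \<open>N \<ge> 2\<close> by (simp add: field_simps)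
    moreover obtain z where "z \<in> G" "dist x z \<le> B / real N ^ n"
      using approx by blast
    ultimately show ?thesis by (metis dist_commute order.strict_trans1)
  qed
  then have "x \<in> closure G" by (simp add: closure_approachable)
  then show "x \<in> G" using \<open>compact G\<close> by (simp add: compact_imp_closed)
qed

lemma INT_UN_finite_decseq:
  assumes "finite I" and dec: "\<And>i. i \<in> I \<Longrightarrow> decseq (A i)"
  shows "(\<Inter>n. \<Union>i\<in>I. A i n) = (\<Union>i\<in>I. \<Inter>n. A i n)"
proof
  show "(\<Inter>n. \<Union>i\<in>I. A i n) \<subseteq> (\<Union>i\<in>I. \<Inter>n. A i n)"
  proof
    fix x assume x: "x \<in> (\<Inter>n. \<Union>i\<in>I. A i n)"
    show "x \<in> (\<Union>i\<in>I. \<Inter>n. A i n)"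
    proof (rule ccontr)
      assume "x \<notin> (\<Union>i\<in>I. \<Inter>n. A i n)"
      then have "\<forall>i\<in>I. \<exists>n. x \<notin> A i n" by blast
      then obtain f where f: "\<And>i. i \<in> I \<Longrightarrow> x \<notin> A i (f i)" by metis
      define m where "m = Max (f ` I)"
      have "x \<notin> A i m" if "i \<in> I" for i
      proof -
        have "f i \<le> m" using \<open>finite I\<close> that unfolding m_def by simp
        then have "A i m \<subseteq> A i (f i)" using dec[OF that] by (simp add: decseq_def)
        then show ?thesis using f[OF that] by blast
      qed
      then show False using x by blast
    qed
  qed
  show "(\<Union>i\<in>I. \<Inter>n. A i n) \<subseteq> (\<Inter>n. \<Union>i\<in>I. A i n)" by blast
qed

lemma gsc_hutchinson_fixpoint_exists:
  assumes N: "N \<ge> 1" and digits: "D \<subseteq> {0..<N} \<times> {0..<N}" and "finite D" "D \<noteq> {}"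
  shows "\<exists>F. compact F \<and> F \<noteq> {} \<and> gsc_hutchinson N D F = F"
proof -
  define Q :: "(real \<times> real) set" where "Q = {0..1} \<times> {0..1}"
  define K where "K n = (gsc_hutchinson N D ^^ n) Q" for n
  have K_Suc: "K (Suc n) = gsc_hutchinson N D (K n)" for n unfolding K_def by simp
  have compact_K: "compact (K n)" for n
    by (induction n) (simp_all add: K_def Q_def compact_Times compact_gsc_hutchinson \<open>finite D\<close>)
  have nonempty_K: "K n \<noteq> {}" for n
    by (induction n) (use \<open>D \<noteq> {}\<close> in \<open>auto simp: K_def Q_def gsc_hutchinson_def\<close>)
  have "K (Suc n) \<subseteq> K n" for n
  proof (induction n)
    case 0
    have "gsc_hutchinson N D Q \<subseteq> Q"
      unfolding gsc_hutchinson_def Q_def using gsc_map_unit_square[OF N] digits by blast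
    then show ?case by (simp add: K_def)
  next
    case (Suc n)
    then show ?case unfolding K_Suc[of "Suc n"] K_Suc[of n] by (rule gsc_hutchinson_mono)
  qed
  then have dec: "decseq K" by (rule decseq_SucI)
  define F where "F = (\<Inter>n. K n)"
  have "compact F" unfolding F_def by (rule compact_Inter) (use compact_K in auto)
  moreover have "F \<noteq> {}" unfolding F_def using compact_K nonempty_K dec
    by (intro compact_nest) (auto simp: decseq_def)
  moreover have "gsc_hutchinson N D F = F"
  proof -
    have "gsc_hutchinson N D F = (\<Union>i\<in>D. \<Inter>n. gsc_map N i ` K n)"
      unfolding gsc_hutchinson_def F_def using inj_gsc_map N
      by (subst image_INT[where C = UNIV]) auto
    also have "\<dots> = (\<Inter>n. K (Suc n))"
      unfolding K_Suc gsc_hutchinson_def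
      using dec by (subst INT_UN_finite_decseq[OF \<open>finite D\<close>]) (auto simp: decseq_def image_mono)
    also have "\<dots> = F" unfolding F_def using decseq_SucD[OF dec] by blast
    finally show ?thesis .
  qed
  ultimately show ?thesis by blast
qed

lemma gsc_attractor:
  assumes "is_GSC N D"
  shows "compact (gsc_attractor N D)" "gsc_attractor N D \<noteq> {}"
    "gsc_attractor N D = (\<Union>i\<in>D. gsc_map N i ` gsc_attractor N D)"
proof -
  have N: "N \<ge> 2" and "D \<subseteq> {0..<N} \<times> {0..<N}" "finite D" "D \<noteq> {}"
    using assms unfolding is_GSC_def by (auto intro: card_ge_0_finite)
  then obtain F where F: "compact F" "F \<noteq> {}" "gsc_hutchinson N D F = F"
    using gsc_hutchinson_fixpoint_exists[of N D] by auto
  have "gsc_attractor N D = F"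
    unfolding gsc_attractor_def
  proof (rule the_equality)
    show "compact F \<and> F \<noteq> {} \<and> F = (\<Union>i\<in>D. gsc_map N i ` F)"
      using F by (simp add: gsc_hutchinson_def)
  next
    fix G assume "compact G \<and> G \<noteq> {} \<and> G = (\<Union>i\<in>D. gsc_map N i ` G)"
    then show "G = F"
      using gsc_hutchinson_fixpoints_subset[OF N] F by (metis gsc_hutchinson_def subset_antisym)
  qed
  then show "compact (gsc_attractor N D)" "gsc_attractor N D \<noteq> {}"
    "gsc_attractor N D = (\<Union>i\<in>D. gsc_map N i ` gsc_attractor N D)"
    using F by (simp_all add: gsc_hutchinson_def)
qed

theorem mainTheorem11:
  fixes N :: nat and D :: "(nat \<times> nat) set"
  assumes "is_GSC N D"
    and "connected (gsc_attractor N D)"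
  shows "fragile N D \<longleftrightarrow>
    (\<exists>x\<in>gsc_attractor N D.
       \<not> graph_connected D (\<lambda>i j. hata_edge N D i j \<and> \<not> hata_label N D i j x))"
proof -
  define F where "F = gsc_attractor N D"
  have "finite D" using assms(1) unfolding is_GSC_def by (auto intro: card_ge_0_finite)
  have "compact F" "F \<noteq> {}" "F = (\<Union>i\<in>D. gsc_map N i ` F)"
    using gsc_attractor[OF assms(1)] unfolding F_def by auto
  moreover have "closed (gsc_map N i ` F)" for i
    using \<open>compact F\<close> by (intro compact_imp_closed compact_continuous_image continuous_on_gsc_map)
  ultimately have "fragile N D \<longleftrightarrow> (\<exists>x\<in>F. \<not> graph_connected D
      (\<lambda>i j. i \<in> D \<and> j \<in> D \<and> i \<noteq> j \<and> gsc_map N i ` F \<inter> gsc_map N j ` F \<noteq> {} \<and>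
             \<not> gsc_map N i ` F \<inter> gsc_map N j ` F = {x}))"
    unfolding fragile_def F_def[symmetric]
    using assms(2) \<open>finite D\<close>
    by (intro single_point_cut_iff_intersection_graph_disconnected) (auto simp: F_def)
  then show ?thesis unfolding F_def hata_edge_def hata_label_def by (simp only: conj_assoc)
qed

end
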